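(* Let $k\ge1$ and $c\in\mathcal{S}_k^\beta$. Then $w_{Hom}(c)=q^{sk-1}$ if $\nu(c)=s-1$; $w_{Hom}(c)=q^{sk-k-1}(q^k-1)$ if $\nu(c)<s-1$; and $w_{Hom}(c)=0$ otherwise.
   Context: Let $R$ be a finite commutative chain ring with maximal ideal $\langle\gamma\rangle$, nilpotency index $s$ and residue field $R/\langle\gamma\rangle\cong\mathbb{F}_q$. Fix coset representatives $T=\{e_0,\dots,e_{q-1}\}$ with $e_0=0,e_1=1$, ordered $e_0<\dots<e_{q-1}$; each $r\in R$ is uniquely $\sum_{i=0}^{s-1}r_i\gamma^i$, $r_i\in T$; order $R$ by $x>y$ iff $x_i>y_i$ in $T$ for the largest $i$ with $x_i\neq y_i$; list $R=\{\rho_0,\dots,\rho_{q^s-1}\}$ increasingly. $\mathbf{a}^{(m)}$ is the constant vector of length $m$. Define $G_1^\alpha=(\rho_0\ \cdots\ \rho_{q^s-1})$ and, for $k>1$, $G_k^\alpha$ as the matrix of $q^s$ column blocks, the $j$-th having first row $\boldsymbol{\rho_j}^{(q^{s(k-1)})}$ and $G_{k-1}^\alpha$ below. List $\langle\gamma\rangle$ increasingly as $a_0\gamma<\dots<a_{q^{s-1}-1}\gamma$. Define $G_1^\beta=(1)$ and, for $k>1$, $G_k^\beta$ as the matrix with column blocks: first a block with first row $\mathbf{1}^{(q^{s(k-1)})}$ and $G_{k-1}^\alpha$ below; then for each $j=0,\dots,q^{s-1}-1$ a block with first row the constant vector with entry $a_j\gamma$ and $G_{k-1}^\beta$ below. $\mathcal{S}_k^\beta$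 is the $R$-submodule generated by the rows of $G_k^\beta$. Homogeneous weight: for $x\in R$, $w_{Hom}(x)=0$ if $x=0$; $(q-1)q^{s-2}$ if $x\neq0$, $x\notin\langle\gamma^{s-1}\rangle$; $q^{s-1}$ if $x\neq0$, $x\in\langle\gamma^{s-1}\rangle$; extended to vectors by summing over coordinates. Valuation: for $x\in R\setminus\{0\}$, $\nu(x)$ is the largest $m$ with $x=\gamma^m\beta$, $\beta$ a unit; $\nu(0)=\infty$; for $x\in R^n$, $\nu(x)=\min_i\nu(x_i)$. *)

theory Defs
  imports Main "HOL-Library.Extended_Nat"
begin

definition is_ideal :: "'a::comm_ring_1 set \<Rightarrow> bool" where
  "is_ideal I \<longleftrightarrow> 0 \<in> I \<and> (\<forall>x\<in>I. \<forall>y\<in>I. x + y \<in> I) \<and> (\<forall>r. \<forall>x\<in>I. r * x \<in> I)"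

definition principal_ideal :: "'a::comm_ring_1 \<Rightarrow> 'a set" where
  "principal_ideal g = {g * x | x. True}"

definition is_maximal_ideal :: "'a::comm_ring_1 set \<Rightarrow> bool" where
  "is_maximal_ideal I \<longleftrightarrow> is_ideal I \<and> I \<noteq> UNIV \<and>
     (\<forall>J. is_ideal J \<longrightarrow> I \<subseteq> J \<longrightarrow> J = I \<or> J = UNIV)"

definition chain_ring :: "'a::comm_ring_1 itself \<Rightarrow> bool" where
  "chain_ring _ \<longleftrightarrow> (0::'a) \<noteq> 1 \<and>
     (\<forall>I J :: 'a set. is_ideal I \<longrightarrow> is_ideal J \<longrightarrow> I \<subseteq> J \<or> J \<subseteq> I)"

definition nilpotency_index :: "'a::comm_ring_1 \<Rightarrow> nat \<Rightarrow> bool" where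
  "nilpotency_index g s \<longleftrightarrow> g ^ s = 0 \<and> (\<forall>m<s. g ^ m \<noteq> 0)"

text \<open>T = [e_0,...,e_{q-1}] is a list of coset representatives of R/<gamma>,
  e_0 = 0, e_1 = 1, the order on T being the list order.\<close>
definition coset_reps :: "'a::comm_ring_1 list \<Rightarrow> 'a \<Rightarrow> bool" where
  "coset_reps T g \<longleftrightarrow> length T \<ge> 2 \<and> T ! 0 = 0 \<and> T ! 1 = 1 \<and>
     (\<forall>x. \<exists>!i. i < length T \<and> x - T ! i \<in> principal_ideal g)"

text \<open>Since the order on R is lexicographic from the highest gamma-adic digit, this is the
  j-th element of R in increasing order (j < q^s).\<close>
definition rho :: "'a::comm_ring_1 list \<Rightarrow> 'a \<Rightarrow> nat \<Rightarrow> nat \<Rightarrow> 'a" where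
  "rho T g s j = (\<Sum>i<s. T ! ((j div length T ^ i) mod length T) * g ^ i)"

text \<open>The j-th element a_j gamma of <gamma> in increasing order (those with zero 0-th digit).\<close>
definition gel :: "'a::comm_ring_1 list \<Rightarrow> 'a \<Rightarrow> nat \<Rightarrow> nat \<Rightarrow> 'a" where
  "gel T g s j = rho T g s (j * length T)"

section \<open>Generator matrices, represented as lists of columns (top entry first)\<close>

fun alpha_cols :: "'a::comm_ring_1 list \<Rightarrow> 'a \<Rightarrow> nat \<Rightarrow> nat \<Rightarrow> 'a list list" where
  "alpha_cols T g s 0 = []"
| "alpha_cols T g s (Suc 0) = map (\<lambda>j. [rho T g s j]) [0..<length T ^ s]"
| "alpha_cols T g s (Suc (Suc k)) =
     concat (map (\<lambda>j. map (\<lambda>col. rho T g s j # col) (alpha_cols T g s (Suc k))) [0..<length T ^ s])"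

fun beta_cols :: "'a::comm_ring_1 list \<Rightarrow> 'a \<Rightarrow> nat \<Rightarrow> nat \<Rightarrow> 'a list list" where
  "beta_cols T g s 0 = []"
| "beta_cols T g s (Suc 0) = [[1]]"
| "beta_cols T g s (Suc (Suc k)) =
     map (\<lambda>col. 1 # col) (alpha_cols T g s (Suc k)) @
     concat (map (\<lambda>j. map (\<lambda>col. gel T g s j # col) (beta_cols T g s (Suc k))) [0..<length T ^ (s - 1)])"

definition S_beta :: "'a::comm_ring_1 list \<Rightarrow> 'a \<Rightarrow> nat \<Rightarrow> nat \<Rightarrow> 'a list set" where
  "S_beta T g s k = {map (\<lambda>col. \<Sum>i<k. x i * col ! i) (beta_cols T g s k) | x :: nat \<Rightarrow> 'a. True}"

definition hom_weight :: "nat \<Rightarrow> 'a::comm_ring_1 \<Rightarrow> nat \<Rightarrow> 'a \<Rightarrow> nat" where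
  "hom_weight q g s x =
     (if x = 0 then 0
      else if x \<notin> principal_ideal (g ^ (s - 1)) then (q - 1) * q ^ (s - 2)
      else q ^ (s - 1))"

definition hom_weight_vec :: "nat \<Rightarrow> 'a::comm_ring_1 \<Rightarrow> nat \<Rightarrow> 'a list \<Rightarrow> nat" where
  "hom_weight_vec q g s c = sum_list (map (hom_weight q g s) c)"

definition val :: "'a::comm_ring_1 \<Rightarrow> 'a \<Rightarrow> enat" where
  "val g x = (if x = 0 then \<infinity> else enat (GREATEST m. \<exists>b. b dvd 1 \<and> x = g ^ m * b))"

definition val_vec :: "'a::comm_ring_1 \<Rightarrow> 'a list \<Rightarrow> enat" where
  "val_vec g c = Min (set (map (val g) c))"

end

theory Submission imports Defs begin

text \<open>Write a codeword as c = x G_k^beta. Factoring out the largest power of gamma dividing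
  every coefficient gives x = gamma^t x' with some x'_i a unit, and nu(c) = t because G_k^beta
  contains the unit columns. Up to unit multiples, the columns of G_k^beta run once through the
  vectors of R^k that have a unit entry (those of G_k^alpha run through all of R^k). As w_Hom is
  invariant under units, |R^*| w_Hom(c) is therefore the sum of w_Hom(gamma^t (x'.v)) over all
  v in R^k minus the same sum over v in <gamma>^k. For an ideal I the linear form v -> x'.v maps
  I^k onto I with fibres of equal size, which reduces both sums to sums of w_Hom(gamma^t a) over
  a in R and over a in <gamma>; these follow from |<gamma^j>| = q^(s-j).\<close>

section \<open>Ideals, vectors and linear forms\<close>

lemma principal_ideal_iff: "x \<in> principal_ideal y \<longleftrightarrow> (\<exists>z. x = y * z)"
  unfolding principal_ideal_def by auto

lemma principal_ideal_1 [simp]: "principal_ideal 1 = UNIV"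
  by (auto simp: principal_ideal_def)

lemma is_ideal_principal_ideal: "is_ideal (principal_ideal y)"
  unfolding is_ideal_def
proof (intro conjI ballI allI)
  show "0 \<in> principal_ideal y"
    unfolding principal_ideal_iff by (rule exI[of _ 0]) simp
next
  fix a b assume "a \<in> principal_ideal y" "b \<in> principal_ideal y"
  then show "a + b \<in> principal_ideal y"
    unfolding principal_ideal_iff by (metis distrib_left)
next
  fix r a assume "a \<in> principal_ideal y"
  then show "r * a \<in> principal_ideal y"
    unfolding principal_ideal_iff by (metis mult.left_commute)
qed

lemma is_ideal_add: "is_ideal I \<Longrightarrow> x \<in> I \<Longrightarrow> y \<in> I \<Longrightarrow> x + y \<in> I"
  unfolding is_ideal_def by blast

lemma is_ideal_mult: "is_ideal I \<Longrightarrow> x \<in> I \<Longrightarrow> r * x \<in> I"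
  unfolding is_ideal_def by blast

lemma is_ideal_diff:
  assumes "is_ideal I" "x \<in> I" "y \<in> I"
  shows "x - y \<in> I"
  using is_ideal_add[OF assms(1,2) is_ideal_mult[OF assms(1,3), of "- 1"]] by simp

lemma is_ideal_sum:
  assumes "is_ideal I" "\<And>i. i \<in> A \<Longrightarrow> f i \<in> I"
  shows "sum f A \<in> I"
  using assms(2)
proof (induction A rule: infinite_finite_induct)
  case (insert x F)
  then show ?case using is_ideal_add[OF assms(1)] by simp
qed (use assms(1) in \<open>simp_all add: is_ideal_def\<close>)

lemma unit_inverse:
  fixes u :: "'a::comm_monoid_mult"
  assumes "u dvd 1"
  obtains v where "u * v = 1" "v dvd 1"
proof -
  obtain v where v: "1 = u * v" using assms by (rule dvdE)
  have "v dvd u * v" by (rule dvd_triv_right)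
  then show ?thesis using that[of v] v by simp
qed

lemma unit_mult_eq_0_iff:
  fixes u :: "'a::comm_semiring_1"
  assumes "u dvd 1"
  shows "a * u = 0 \<longleftrightarrow> a = 0"
proof
  obtain v where "u * v = 1" using assms by (rule unit_inverse)
  then have "a = a * u * v" by (simp add: mult.assoc)
  then show "a * u = 0 \<Longrightarrow> a = 0" by simp
qed simp

definition vectors :: "'a set \<Rightarrow> nat \<Rightarrow> 'a list set" where
  "vectors I k = {v. set v \<subseteq> I \<and> length v = k}"

lemma finite_vectors: "finite I \<Longrightarrow> finite (vectors I k)"
  unfolding vectors_def by (rule finite_lists_length_eq)

lemma card_vectors: "finite I \<Longrightarrow> card (vectors I k) = card I ^ k"
  unfolding vectors_def by (rule card_lists_length_eq)

lemma vectors_0 [simp]: "vectors I 0 = {[]}"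
  unfolding vectors_def by auto

lemma vectors_mono: "I \<subseteq> J \<Longrightarrow> vectors I k \<subseteq> vectors J k"
  unfolding vectors_def by auto

lemma sum_vectors_Suc:
  "(\<Sum>w\<in>vectors I (Suc n). F w) = (\<Sum>r\<in>I. \<Sum>v\<in>vectors I n. F (r # v))"
proof -
  have img: "vectors I (Suc n) = (\<lambda>(r, v). r # v) ` (I \<times> vectors I n)"
  proof (intro set_eqI iffI)
    fix w assume "w \<in> vectors I (Suc n)"
    then obtain r v where "w = r # v" "r \<in> I" "v \<in> vectors I n"
      unfolding vectors_def by (cases w) auto
    then show "w \<in> (\<lambda>(r, v). r # v) ` (I \<times> vectors I n)" by force
  qed (auto simp: vectors_def)
  have "inj_on (\<lambda>(r, v). r # v) (I \<times> vectors I n)"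
    by (auto simp: inj_on_def)
  then have "(\<Sum>w\<in>vectors I (Suc n). F w) = (\<Sum>(r, v)\<in>I \<times> vectors I n. F (r # v))"
    unfolding img by (simp add: sum.reindex case_prod_unfold)
  then show ?thesis by (simp add: sum.cartesian_product)
qed

definition dot :: "nat \<Rightarrow> (nat \<Rightarrow> 'a::comm_ring_1) \<Rightarrow> 'a list \<Rightarrow> 'a" where
  "dot k x v = (\<Sum>i<k. x i * v ! i)"

lemma dot_list_update:
  assumes "i < k" "length v = k"
  shows "dot k x (v[i := c]) = dot k x v + x i * (c - v ! i)"
proof -
  have "dot k x (v[i := c]) = (\<Sum>j<k. x j * v ! j + (if j = i then x i * (c - v ! i) else 0))"
    unfolding dot_def
    by (rule sum.cong[OF refl]) (use assms in \<open>auto simp: nth_list_update algebra_simps\<close>)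
  then show ?thesis
    unfolding dot_def sum.distrib using assms(1) by simp
qed

lemma dot_unit_vector: "i < k \<Longrightarrow> dot k x ((replicate k 0)[i := 1]) = x i"
  unfolding dot_def by (simp add: nth_list_update if_distrib cong: if_cong)

lemma dot_map_mult: "length v = k \<Longrightarrow> dot k x (map ((*) u) v) = u * dot k x v"
  unfolding dot_def by (simp add: sum_distrib_left mult.left_commute)

lemma dot_mem_ideal: "is_ideal I \<Longrightarrow> v \<in> vectors I k \<Longrightarrow> dot k x v \<in> I"
  unfolding dot_def vectors_def
  by (auto intro!: is_ideal_sum is_ideal_mult nth_mem)

lemma sum_translate_ideal:
  assumes "is_ideal I" "b \<in> I"
  shows "(\<Sum>a\<in>I. h (b + a)) = (\<Sum>a\<in>I. h a)"
  by (rule sum.reindex_bij_witness[where i = "\<lambda>a. a - b" and j = "\<lambda>a. b + a"])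
     (use assms in \<open>auto intro: is_ideal_add is_ideal_diff\<close>)

lemma sum_vectors_dot_translate:
  assumes I: "is_ideal I" and i: "i < k" and e: "x i * e = 1" and a: "a \<in> I"
  shows "(\<Sum>v\<in>vectors I k. h (dot k x v + a)) = (\<Sum>v\<in>vectors I k. h (dot k x v))"
proof (rule sum.reindex_bij_witness[where i = "\<lambda>v. v[i := v ! i - e * a]"
                                        and j = "\<lambda>v. v[i := v ! i + e * a]"])
  have ea: "e * a \<in> I" by (rule is_ideal_mult[OF I a])
  fix v assume "v \<in> vectors I k"
  then have lv: "length v = k" and sv: "set v \<subseteq> I" unfolding vectors_def by auto
  have vi: "v ! i \<in> I" using sv lv i by (auto intro: nth_mem)
  show "(v[i := v ! i + e * a])[i := (v[i := v ! i + e * a]) ! i - e * a] = v"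
       "(v[i := v ! i - e * a])[i := (v[i := v ! i - e * a]) ! i + e * a] = v"
    using lv i by simp_all
  have "set (v[i := c]) \<subseteq> I" if "c \<in> I" for c
    using sv set_update_subset_insert[of v i c] that by blast
  then show "v[i := v ! i + e * a] \<in> vectors I k" "v[i := v ! i - e * a] \<in> vectors I k"
    using lv is_ideal_add[OF I vi ea] is_ideal_diff[OF I vi ea] unfolding vectors_def by simp_all
  have "dot k x (v[i := v ! i + e * a]) = dot k x v + x i * e * a"
    using dot_list_update[OF i lv] by (simp add: mult.assoc)
  then show "h (dot k x (v[i := v ! i + e * a])) = h (dot k x v + a)"
    using e by simp
qed

text \<open>Translating one coordinate of v by a unit multiple shows that all fibres of the
  linear form on I^k have the same size.\<close>
lemma sum_vectors_dot:
  assumes I: "is_ideal I" "finite I" and i: "i < Suc m" and e: "x i * e = 1"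
  shows "(\<Sum>v\<in>vectors I (Suc m). h (dot (Suc m) x v)) = card I ^ m * (\<Sum>a\<in>I. (h a :: nat))"
proof -
  let ?k = "Suc m"
  have "card I * (\<Sum>v\<in>vectors I ?k. h (dot ?k x v)) = (\<Sum>a\<in>I. \<Sum>v\<in>vectors I ?k. h (dot ?k x v + a))"
    by (simp add: sum_vectors_dot_translate[where x = x and i = i and e = e, OF I(1) i e])
  also have "\<dots> = (\<Sum>v\<in>vectors I ?k. \<Sum>a\<in>I. h (dot ?k x v + a))"
    by (rule sum.swap)
  also have "\<dots> = card I * (card I ^ m * (\<Sum>a\<in>I. h a))"
    by (simp add: sum_translate_ideal[OF I(1) dot_mem_ideal[OF I(1)]] card_vectors[OF I(2)])
  finally show ?thesis
    using I card_gt_0_iff[of I] is_ideal_def by force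
qed

lemma sum_list_map_concat:
  "sum_list (map f (concat xss)) = sum_list (map (\<lambda>xs. sum_list (map f xs)) xss)"
  by (induction xss) simp_all

lemma sum_list_map_sum:
  "sum_list (map (\<lambda>b. \<Sum>a\<in>A. f a b) xs) = (\<Sum>a\<in>A. sum_list (map (f a) xs))"
  by (induction xs) (simp_all add: sum.distrib)

lemma sum_list_map_upt: "sum_list (map f [0..<n]) = (\<Sum>j<n. f j)"
  by (simp add: interv_sum_list_conv_sum_set_nat atLeast0LessThan)

lemma sum_nested_step_function:
  assumes "finite A" "C \<subseteq> B" "B \<subseteq> A"
  shows "(\<Sum>a\<in>A. if a \<in> C then 0 else if a \<in> B then y else (z::nat)) =
     z * (card A - card B) + y * (card B - card C)"
proof -
  let ?f = "\<lambda>a. if a \<in> C then 0 else if a \<in> B then y else z"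
  have fB: "finite B" using finite_subset[OF assms(3,1)] .
  have fC: "finite C" using finite_subset[OF assms(2) fB] .
  have "sum ?f A = sum ?f (A - B) + sum ?f B"
    by (rule sum.subset_diff[OF assms(3,1)])
  also have "sum ?f B = sum ?f (B - C) + sum ?f C"
    by (rule sum.subset_diff[OF assms(2) fB])
  also have "sum ?f (A - B) = z * card (A - B)"
    using assms(2) by (subst sum.cong[OF refl, of _ _ "\<lambda>_. z"]) auto
  also have "sum ?f (B - C) = y * card (B - C)"
    by (subst sum.cong[OF refl, of _ _ "\<lambda>_. y"]) auto
  also have "sum ?f C = 0"
    by (rule sum.neutral) simp
  finally show ?thesis
    by (simp add: card_Diff_subset[OF fB assms(3)] card_Diff_subset[OF fC assms(2)])
qed

definition primitive_vectors :: "nat \<Rightarrow> 'a::comm_ring_1 list set" where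
  "primitive_vectors k = {v \<in> vectors UNIV k. \<exists>x\<in>set v. x dvd 1}"

lemma primitive_vectors_0 [simp]: "primitive_vectors 0 = {}"
  unfolding primitive_vectors_def by simp

lemma sum_ideal_mult_unit:
  fixes u :: "'a::comm_ring_1"
  assumes "is_ideal I" "u dvd 1"
  shows "(\<Sum>a\<in>I. h (u * a)) = (\<Sum>a\<in>I. h a)"
proof -
  obtain v where v: "1 = u * v" using assms(2) by (rule dvdE)
  show ?thesis
    by (rule sum.reindex_bij_witness[where i = "(*) v" and j = "(*) u"])
       (use assms(1) v in \<open>auto simp: mult.assoc[symmetric] mult.commute[of v u] intro: is_ideal_mult\<close>)
qed

lemma sum_vectors_map_mult_unit:
  fixes u :: "'a::comm_ring_1"
  assumes "u dvd 1"
  shows "(\<Sum>v\<in>vectors UNIV n. H (map ((*) u) v)) = (\<Sum>v\<in>vectors UNIV n. H v)"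
proof -
  obtain v where v: "1 = u * v" using assms by (rule dvdE)
  show ?thesis
    by (rule sum.reindex_bij_witness[where i = "map ((*) v)" and j = "map ((*) u)"])
       (use v in \<open>auto simp: vectors_def comp_def mult.assoc[symmetric] mult.commute[of v u]\<close>)
qed

section \<open>Finite chain rings\<close>

locale finite_chain_ring =
  fixes g :: "'a::{comm_ring_1, finite}" and s :: nat and T :: "'a list"
  assumes chain_ring: "chain_ring TYPE('a)"
    and maximal: "is_maximal_ideal (principal_ideal g)"
    and nilpotency: "nilpotency_index g s"
    and coset_reps: "coset_reps T g"
begin

abbreviation q :: nat where "q \<equiv> length T"

abbreviation pow_ideal :: "nat \<Rightarrow> 'a set" where "pow_ideal j \<equiv> principal_ideal (g ^ j)"

lemma pow_s_eq_0: "g ^ s = 0"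
  using nilpotency unfolding nilpotency_index_def by auto

lemma pow_neq_0: "m < s \<Longrightarrow> g ^ m \<noteq> 0"
  using nilpotency unfolding nilpotency_index_def by auto

lemma s_pos: "s \<ge> 1"
  using pow_s_eq_0 chain_ring unfolding chain_ring_def by (cases s) auto

lemma pow_ideal_s: "pow_ideal s = {0}"
  using pow_s_eq_0 by (auto simp: principal_ideal_def)

lemma pow_ideal_antimono: "i \<le> j \<Longrightarrow> pow_ideal j \<subseteq> pow_ideal i"
  unfolding principal_ideal_def by (auto simp: le_iff_add power_add mult.assoc)

lemma one_notin_maximal: "1 \<notin> principal_ideal g"
proof
  assume "1 \<in> principal_ideal g"
  then have "y \<in> principal_ideal g" for y
    using is_ideal_mult[OF is_ideal_principal_ideal, of 1 g y] by simp
  then show False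
    using maximal unfolding is_maximal_ideal_def by blast
qed

text \<open>For u outside the maximal ideal, the ideal generated by u is comparable with, hence
  contains, the maximal ideal; so it is the whole ring.\<close>
lemma unit_iff_notin_maximal: "u dvd 1 \<longleftrightarrow> u \<notin> principal_ideal g"
proof
  assume "u dvd 1"
  then obtain v where "1 = u * v" by (rule dvdE)
  then show "u \<notin> principal_ideal g"
    using one_notin_maximal is_ideal_mult[OF is_ideal_principal_ideal, of u g v]
    by (metis mult.commute)
next
  assume notin: "u \<notin> principal_ideal g"
  have u_in: "u \<in> principal_ideal u"
    unfolding principal_ideal_iff by (rule exI[of _ 1]) simp
  have "principal_ideal u \<subseteq> principal_ideal g \<or> principal_ideal g \<subseteq> principal_ideal u"
    using chain_ring is_ideal_principal_ideal unfolding chain_ring_def by blast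
  then have "principal_ideal g \<subseteq> principal_ideal u"
    using notin u_in by blast
  then have "principal_ideal u = UNIV"
    using maximal is_ideal_principal_ideal notin u_in unfolding is_maximal_ideal_def by blast
  then obtain v where "1 = u * v"
    using principal_ideal_iff by blast
  then show "u dvd 1" by (rule dvdI)
qed

lemma unit_diff_maximal:
  assumes "u dvd 1"
  shows "u - g * z dvd 1"
proof -
  have "u - g * z \<notin> principal_ideal g"
  proof
    assume "u - g * z \<in> principal_ideal g"
    then obtain y where "u - g * z = g * y" unfolding principal_ideal_iff by blast
    then have "u = g * (y + z)" by (simp add: algebra_simps eq_diff_eq)
    then show False using assms unfolding unit_iff_notin_maximal principal_ideal_iff by blast
  qed
  then show ?thesis unfolding unit_iff_notin_maximal .
qed

lemma nonzero_eq_pow_mult_unit: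
  assumes "x \<noteq> 0"
  obtains m u where "m < s" "u dvd 1" "x = g ^ m * u"
proof -
  define A where "A = {m. x \<in> pow_ideal m}"
  have bounded: "m < s" if "m \<in> A" for m
  proof (rule ccontr)
    assume "\<not> m < s"
    then have "x \<in> pow_ideal s"
      using that pow_ideal_antimono[of s m] unfolding A_def by auto
    then show False
      using pow_ideal_s assms by simp
  qed
  then have "finite A"
    by (meson finite_nat_set_iff_bounded)
  moreover have "0 \<in> A"
    unfolding A_def by simp
  ultimately have "Max A \<in> A" and max: "\<And>n. n \<in> A \<Longrightarrow> n \<le> Max A"
    using Max_in by auto
  then obtain u where u: "x = g ^ Max A * u"
    unfolding A_def mem_Collect_eq principal_ideal_iff by blast
  have "u \<notin> principal_ideal g"
  proof
    assume "u \<in> principal_ideal g"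
    then have "x \<in> pow_ideal (Suc (Max A))"
      unfolding principal_ideal_iff u by (auto simp: mult_ac)
    then show False
      using max[of "Suc (Max A)"] unfolding A_def by simp
  qed
  then show ?thesis
    using that bounded[OF \<open>Max A \<in> A\<close>] u unit_iff_notin_maximal by blast
qed

lemma exponent_le_of_pow_mult_unit:
  assumes "u dvd 1" "m < s" "g ^ m * u = g ^ n * y"
  shows "n \<le> m"
proof (rule ccontr)
  assume "\<not> n \<le> m"
  then have "n = m + 1 + (n - m - 1)" by simp
  then have "g ^ n = g ^ m * g * g ^ (n - m - 1)"
    by (metis power_add power_one_right)
  then have "g ^ m * (u - g * (g ^ (n - m - 1) * y)) = 0"
    using assms(3) by (simp add: algebra_simps)
  then have "g ^ m = 0"
    using unit_mult_eq_0_iff[OF unit_diff_maximal[OF assms(1)]] by (simp add: mult.commute)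
  then show False
    using pow_neq_0 assms(2) by simp
qed

lemma pow_mult_mem_pow_ideal_iff:
  assumes "t \<le> n" "n \<le> s"
  shows "g ^ t * a \<in> pow_ideal n \<longleftrightarrow> a \<in> pow_ideal (n - t)"
proof
  assume mem: "g ^ t * a \<in> pow_ideal n"
  show "a \<in> pow_ideal (n - t)"
  proof (cases "a = 0")
    case False
    then obtain m u where mu: "m < s" "u dvd 1" "a = g ^ m * u"
      by (rule nonzero_eq_pow_mult_unit)
    have "n - t \<le> m"
    proof (cases "t + m < s")
      case True
      obtain y where "g ^ t * a = g ^ n * y"
        using mem unfolding principal_ideal_iff by blast
      then have "g ^ (t + m) * u = g ^ n * y"
        using mu by (simp add: power_add mult.assoc)
      then have "n \<le> t + m"
        by (rule exponent_le_of_pow_mult_unit[OF mu(2) True])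
      then show ?thesis by simp
    qed (use assms in simp)
    then have "a = g ^ (n - t) * (g ^ (m - (n - t)) * u)"
      using mu by (simp add: mult.assoc[symmetric] power_add[symmetric])
    then show ?thesis
      unfolding principal_ideal_iff by blast
  qed (simp add: principal_ideal_iff exI[of _ 0])
next
  assume "a \<in> pow_ideal (n - t)"
  then obtain z where "a = g ^ (n - t) * z"
    unfolding principal_ideal_iff by blast
  then have "g ^ t * a = g ^ n * z"
    using assms(1) by (simp add: mult.assoc[symmetric] power_add[symmetric])
  then show "g ^ t * a \<in> pow_ideal n"
    unfolding principal_ideal_iff by blast
qed

lemma pow_mult_eq_0_iff: "t \<le> s \<Longrightarrow> g ^ t * a = 0 \<longleftrightarrow> a \<in> pow_ideal (s - t)"
  using pow_mult_mem_pow_ideal_iff[of t s a] pow_ideal_s by simp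

lemma val_pow_mult_unit:
  assumes "u dvd 1" "m < s"
  shows "val g (g ^ m * u) = enat m"
proof -
  have "g ^ m * u \<noteq> 0"
    using unit_mult_eq_0_iff[OF assms(1)] pow_neq_0[OF assms(2)] by blast
  moreover have "(GREATEST n. \<exists>b. b dvd 1 \<and> g ^ m * u = g ^ n * b) = m"
    by (rule Greatest_equality) (use assms exponent_le_of_pow_mult_unit in blast)+
  ultimately show ?thesis
    unfolding val_def by simp
qed

lemma val_pow_mult_ge: "enat t \<le> val g (g ^ t * y)"
proof (cases "g ^ t * y = 0")
  case False
  then obtain m u where mu: "m < s" "u dvd 1" "y = g ^ m * u"
    using nonzero_eq_pow_mult_unit by (metis mult_zero_right)
  have "t + m < s"
    using False pow_s_eq_0 unfolding mu(3)
    by (metis le_iff_add mult.assoc mult_zero_left not_less power_add)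
  then show ?thesis
    using val_pow_mult_unit[OF mu(2), of "t + m"] by (simp add: mu(3) power_add mult.assoc)
qed (simp add: val_def)

lemma coefficients_eq_pow_mult_unit:
  assumes "i1 < k" "x i1 \<noteq> 0"
  obtains t i x' where "t < s" "i < k" "x' i dvd 1" "\<forall>i<k. x i = g ^ t * x' i"
proof -
  let ?D = "\<lambda>m. \<forall>i<k. x i \<in> pow_ideal m"
  define t where "t = (GREATEST m. ?D m)"
  have bound: "m < s" if "?D m" for m
  proof (rule ccontr)
    assume "\<not> m < s"
    then have "x i1 \<in> pow_ideal s"
      using that assms(1) pow_ideal_antimono[of s m] by auto
    then show False
      using assms(2) pow_ideal_s by simp
  qed
  have "?D t"
    unfolding t_def by (rule GreatestI_nat[of _ 0 s]) (use bound in \<open>auto intro: less_imp_le\<close>)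
  then obtain x' where x': "\<forall>i<k. x i = g ^ t * x' i"
    unfolding principal_ideal_iff by metis
  have "\<not> ?D (Suc t)"
    using Greatest_le_nat[of ?D "Suc t" s] bound unfolding t_def by fastforce
  then obtain i where i: "i < k" "x i \<notin> pow_ideal (Suc t)"
    by blast
  have "x' i \<notin> principal_ideal g"
  proof
    assume "x' i \<in> principal_ideal g"
    then have "x i \<in> pow_ideal (Suc t)"
      using x' i(1) unfolding principal_ideal_iff by (auto simp: mult_ac)
    then show False
      using i(2) by simp
  qed
  then show ?thesis
    using that bound[OF \<open>?D t\<close>] i(1) x' unit_iff_notin_maximal by blast
qed

subsection \<open>The gamma-adic enumeration of R\<close>

lemma q_ge_2: "q \<ge> 2"
  using coset_reps unfolding coset_reps_def by simp

lemma reps_nonempty [simp]: "T \<noteq> []"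
  using q_ge_2 by auto

lemma q_pos: "q > 0"
  by simp

lemma rep_0: "T ! 0 = 0"
  using coset_reps unfolding coset_reps_def by simp

lemma rep_exists: "\<exists>i < q. x - T ! i \<in> principal_ideal g"
  using coset_reps unfolding coset_reps_def by metis

lemma rep_unique:
  assumes "i < q" "j < q" "T ! i - T ! j \<in> principal_ideal g"
  shows "i = j"
proof -
  have "T ! i - T ! i \<in> principal_ideal g"
    by (simp add: principal_ideal_iff exI[of _ 0])
  moreover have "\<exists>!n. n < q \<and> T ! i - T ! n \<in> principal_ideal g"
    using coset_reps unfolding coset_reps_def by blast
  ultimately show ?thesis
    using assms by blast
qed

lemma rho_0 [simp]: "rho T g m 0 = 0"
  unfolding rho_def by (simp add: rep_0)

lemma rho_Suc: "rho T g (Suc m) n = T ! (n mod q) + g * rho T g m (n div q)"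
proof -
  have "rho T g (Suc m) n = T ! ((n div q ^ 0) mod q) * g ^ 0 +
      (\<Sum>i<m. T ! ((n div q ^ Suc i) mod q) * g ^ Suc i)"
    unfolding rho_def by (rule sum.lessThan_Suc_shift)
  also have "(\<Sum>i<m. T ! ((n div q ^ Suc i) mod q) * g ^ Suc i) = g * rho T g m (n div q)"
    unfolding rho_def sum_distrib_left
    by (rule sum.cong) (simp_all add: div_mult2_eq mult_ac)
  finally show ?thesis by simp
qed

lemma rho_surj: "\<exists>n < q ^ m. r - rho T g m n \<in> pow_ideal m"
proof (induction m arbitrary: r)
  case (Suc m)
  obtain i r1 where i: "i < q" "r - T ! i = g * r1"
    using rep_exists unfolding principal_ideal_iff by blast
  obtain n1 r2 where n1: "n1 < q ^ m" "r1 - rho T g m n1 = g ^ m * r2"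
    using Suc.IH unfolding principal_ideal_iff by blast
  have "i + q * n1 < q * (n1 + 1)" using i(1) by simp
  also have "\<dots> \<le> q * q ^ m" using n1(1) by (intro mult_le_mono2) simp
  finally have lt: "i + q * n1 < q ^ Suc m" by simp
  have "(i + q * n1) mod q = i" "(i + q * n1) div q = n1"
    using i(1) q_pos by simp_all
  then have "r - rho T g (Suc m) (i + q * n1) = g * (r1 - rho T g m n1)"
    unfolding rho_Suc using i(2) by (simp add: algebra_simps)
  also have "\<dots> = g ^ Suc m * r2"
    using n1(2) by (simp add: mult.assoc)
  finally show ?case
    using lt unfolding principal_ideal_iff by blast
qed (simp add: principal_ideal_def)

lemma rho_inj:
  "m \<le> s \<Longrightarrow> n < q ^ m \<Longrightarrow> n' < q ^ m \<Longrightarrow>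
   rho T g m n - rho T g m n' \<in> pow_ideal m \<Longrightarrow> n = n'"
proof (induction m arbitrary: n n')
  case (Suc m)
  obtain y where y: "rho T g (Suc m) n - rho T g (Suc m) n' = g ^ Suc m * y"
    using Suc.prems(4) unfolding principal_ideal_iff by blast
  define d where "d = rho T g m (n div q) - rho T g m (n' div q)"
  have eq: "T ! (n mod q) - T ! (n' mod q) = g * (g ^ m * y - d)"
    using y unfolding rho_Suc d_def by (simp add: algebra_simps)
  have mod_eq: "n mod q = n' mod q"
    by (rule rep_unique) (use eq q_pos in \<open>auto simp: principal_ideal_iff\<close>)
  then have "g ^ 1 * (d - g ^ m * y) = 0"
    using eq by (simp add: algebra_simps)
  then have "d - g ^ m * y \<in> pow_ideal (s - 1)"
    using pow_mult_eq_0_iff[of 1] s_pos by simp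
  moreover have "pow_ideal (s - 1) \<subseteq> pow_ideal m"
    using Suc.prems(1) by (intro pow_ideal_antimono) simp
  ultimately have "d - g ^ m * y \<in> pow_ideal m"
    by blast
  moreover have "g ^ m * y \<in> pow_ideal m"
    unfolding principal_ideal_iff by blast
  ultimately have "d \<in> pow_ideal m"
    using is_ideal_add[OF is_ideal_principal_ideal] by fastforce
  moreover have "n div q < q ^ m" "n' div q < q ^ m"
    using Suc.prems(2,3) by (simp_all add: less_mult_imp_div_less mult.commute)
  ultimately have "n div q = n' div q"
    using Suc.IH Suc.prems(1) unfolding d_def by simp
  then show ?case
    using mod_eq by (metis div_mult_mod_eq)
qed simp

lemma bij_betw_pow_ideal:
  assumes "j \<le> s"
  shows "bij_betw (\<lambda>n. g ^ j * rho T g (s - j) n) {..<q ^ (s - j)} (pow_ideal j)"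
proof (rule bij_betw_imageI)
  show "inj_on (\<lambda>n. g ^ j * rho T g (s - j) n) {..<q ^ (s - j)}"
  proof (rule inj_onI)
    fix n n' assume n: "n \<in> {..<q ^ (s - j)}" "n' \<in> {..<q ^ (s - j)}"
      and "g ^ j * rho T g (s - j) n = g ^ j * rho T g (s - j) n'"
    then have "g ^ j * (rho T g (s - j) n - rho T g (s - j) n') = 0"
      by (simp add: right_diff_distrib)
    then show "n = n'"
      using rho_inj[of "s - j" n n'] n pow_mult_eq_0_iff assms by simp
  qed
  show "(\<lambda>n. g ^ j * rho T g (s - j) n) ` {..<q ^ (s - j)} = pow_ideal j"
  proof (intro set_eqI iffI)
    fix y assume "y \<in> pow_ideal j"
    then obtain r where r: "y = g ^ j * r"
      unfolding principal_ideal_iff by blast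
    obtain n where n: "n < q ^ (s - j)" "r - rho T g (s - j) n \<in> pow_ideal (s - j)"
      using rho_surj by blast
    then have "g ^ j * (r - rho T g (s - j) n) = 0"
      using pow_mult_eq_0_iff assms by simp
    then have "y = g ^ j * rho T g (s - j) n"
      using r by (simp add: right_diff_distrib)
    then show "y \<in> (\<lambda>n. g ^ j * rho T g (s - j) n) ` {..<q ^ (s - j)}"
      using n(1) by blast
  qed (auto simp: principal_ideal_iff)
qed

lemma card_pow_ideal: "j \<le> s \<Longrightarrow> card (pow_ideal j) = q ^ (s - j)"
  using bij_betw_same_card[OF bij_betw_pow_ideal] by simp

lemma card_UNIV: "card (UNIV :: 'a set) = q ^ s"
  using card_pow_ideal[of 0] by simp

lemma bij_betw_rho: "bij_betw (rho T g s) {..<q ^ s} UNIV"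
  using bij_betw_pow_ideal[of 0] by simp

lemma bij_betw_gel: "bij_betw (gel T g s) {..<q ^ (s - 1)} (principal_ideal g)"
proof -
  obtain m where m: "s = Suc m"
    using s_pos by (cases s) auto
  have "gel T g s = (\<lambda>j. g ^ 1 * rho T g (s - 1) j)"
    unfolding gel_def m rho_Suc using q_pos by (simp add: rep_0)
  then show ?thesis
    using bij_betw_pow_ideal[of 1] s_pos by simp
qed

subsection \<open>Columns of the generator matrices\<close>

lemma sum_alpha_cols:
  "sum_list (map F (alpha_cols T g s (Suc m))) = (\<Sum>v\<in>vectors UNIV (Suc m). F v)"
proof (induction m arbitrary: F)
  case 0
  have "sum_list (map F (alpha_cols T g s (Suc 0))) = (\<Sum>j<q ^ s. F [rho T g s j])"
    by (simp add: sum_list_map_upt comp_def)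
  also have "\<dots> = (\<Sum>r\<in>UNIV. F [r])"
    by (rule sum.reindex_bij_betw[OF bij_betw_rho])
  finally show ?case
    unfolding sum_vectors_Suc by simp
next
  case (Suc m)
  have "sum_list (map F (alpha_cols T g s (Suc (Suc m)))) =
     (\<Sum>j<q ^ s. sum_list (map (\<lambda>v. F (rho T g s j # v)) (alpha_cols T g s (Suc m))))"
    by (simp add: sum_list_map_concat sum_list_map_upt comp_def)
  also have "\<dots> = (\<Sum>j<q ^ s. \<Sum>v\<in>vectors UNIV (Suc m). F (rho T g s j # v))"
    unfolding Suc.IH ..
  also have "\<dots> = (\<Sum>r\<in>UNIV. \<Sum>v\<in>vectors UNIV (Suc m). F (r # v))"
    by (rule sum.reindex_bij_betw[OF bij_betw_rho])
  finally show ?case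
    unfolding sum_vectors_Suc .
qed

lemma replicate_0_in_alpha_cols: "replicate (Suc m) 0 \<in> set (alpha_cols T g s (Suc m))"
proof (induction m)
  case 0
  show ?case
    using q_pos by (auto simp: image_iff intro!: bexI[of _ 0])
next
  case (Suc m)
  show ?case
    using Suc.IH q_pos by (auto intro!: bexI[of _ 0])
qed

lemma unit_vector_in_beta_cols:
  "i < Suc m \<Longrightarrow> (replicate (Suc m) 0)[i := 1] \<in> set (beta_cols T g s (Suc m))"
proof (induction m arbitrary: i)
  case (Suc m)
  show ?case
  proof (cases i)
    case 0
    then show ?thesis
      using replicate_0_in_alpha_cols[of m] by simp
  next
    case (Suc i')
    have "gel T g s 0 = 0"
      unfolding gel_def by simp
    then have "0 # (replicate (Suc m) 0)[i' := 1] \<in> set (beta_cols T g s (Suc (Suc m)))"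
      using Suc.IH[of i'] Suc.prems q_pos \<open>i = Suc i'\<close> by force
    then show ?thesis
      using \<open>i = Suc i'\<close> by simp
  qed
qed simp

lemma sum_units_maximal_split:
  "(\<Sum>r\<in>UNIV. f r) = (\<Sum>r\<in>{u. u dvd 1}. f r) + (\<Sum>r\<in>principal_ideal g. f r)"
proof -
  have "UNIV = {u. u dvd 1} \<union> principal_ideal g" "{u. u dvd 1} \<inter> principal_ideal g = {}"
    using unit_iff_notin_maximal by auto
  then show ?thesis
    by (metis finite sum.union_disjoint)
qed

text \<open>Splitting a vector with a unit entry by its first entry: either that entry is a unit,
  which can be normalised to 1, or it lies in the maximal ideal and the tail has a unit entry.\<close>
lemma sum_primitive_vectors_Suc:
  assumes inv: "\<And>u v. u dvd 1 \<Longrightarrow> length v = Suc n \<Longrightarrow> F (map ((*) u) v) = F v"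
  shows "(\<Sum>w\<in>primitive_vectors (Suc n). F w) =
     card {u::'a. u dvd 1} * (\<Sum>v\<in>vectors UNIV n. F (1 # v)) +
     (\<Sum>v\<in>primitive_vectors n. \<Sum>a\<in>principal_ideal g. F (a # v))"
proof -
  let ?P = "\<lambda>v::'a list. \<exists>x\<in>set v. x dvd 1"
  let ?f = "\<lambda>r. \<Sum>v\<in>vectors UNIV n. if ?P (r # v) then F (r # v) else 0"
  have "(\<Sum>w\<in>primitive_vectors (Suc n). F w) =
      (\<Sum>w\<in>vectors UNIV (Suc n). if ?P w then F w else 0)"
    unfolding primitive_vectors_def by (rule sum.inter_filter) (simp add: finite_vectors)
  also have "\<dots> = (\<Sum>r\<in>UNIV. ?f r)"
    unfolding sum_vectors_Suc ..
  also have "\<dots> = (\<Sum>r\<in>{u. u dvd 1}. ?f r) + (\<Sum>r\<in>principal_ideal g. ?f r)"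
    by (rule sum_units_maximal_split)
  also have "(\<Sum>r\<in>{u. u dvd 1}. ?f r) = (\<Sum>r\<in>{u::'a. u dvd 1}. \<Sum>v\<in>vectors UNIV n. F (1 # v))"
  proof (rule sum.cong[OF refl])
    fix r :: 'a assume "r \<in> {u. u dvd 1}"
    then have r: "r dvd 1" by simp
    then obtain r' where r': "r * r' = 1" "r' dvd 1"
      by (rule unit_inverse)
    have "?f r = (\<Sum>v\<in>vectors UNIV n. F (map ((*) r) (1 # map ((*) r') v)))"
      using r'(1) by (intro sum.cong) (simp_all add: r comp_def mult.assoc[symmetric])
    also have "\<dots> = (\<Sum>v\<in>vectors UNIV n. F (1 # map ((*) r') v))"
      using r by (intro sum.cong) (simp_all add: inv vectors_def del: list.map)
    also have "\<dots> = (\<Sum>v\<in>vectors UNIV n. F (1 # v))"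
      by (rule sum_vectors_map_mult_unit[OF r'(2)])
    finally show "?f r = (\<Sum>v\<in>vectors UNIV n. F (1 # v))" .
  qed
  also have "(\<Sum>r\<in>principal_ideal g. ?f r) =
      (\<Sum>r\<in>principal_ideal g. \<Sum>v\<in>primitive_vectors n. F (r # v))"
  proof (rule sum.cong[OF refl])
    fix r assume "r \<in> principal_ideal g"
    then have "\<not> r dvd 1"
      using unit_iff_notin_maximal by blast
    then have "?f r = (\<Sum>v\<in>vectors UNIV n. if ?P v then F (r # v) else 0)"
      by simp
    also have "\<dots> = (\<Sum>v\<in>primitive_vectors n. F (r # v))"
      unfolding primitive_vectors_def by (rule sum.inter_filter[symmetric]) (simp add: finite_vectors)
    finally show "?f r = (\<Sum>v\<in>primitive_vectors n. F (r # v))" .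
  qed
  finally show ?thesis
    by (simp add: sum.swap[of _ "principal_ideal g"])
qed

lemma sum_beta_cols_Suc:
  "sum_list (map F (beta_cols T g s (Suc (Suc m)))) =
     (\<Sum>v\<in>vectors UNIV (Suc m). F (1 # v)) +
     sum_list (map (\<lambda>v. \<Sum>a\<in>principal_ideal g. F (a # v)) (beta_cols T g s (Suc m)))"
proof -
  have "sum_list (map F (beta_cols T g s (Suc (Suc m)))) =
     sum_list (map (\<lambda>v. F (1 # v)) (alpha_cols T g s (Suc m))) +
     (\<Sum>j<q ^ (s - 1). sum_list (map (\<lambda>v. F (gel T g s j # v)) (beta_cols T g s (Suc m))))"
    by (simp add: sum_list_map_concat sum_list_map_upt comp_def)
  also have "(\<Sum>j<q ^ (s - 1). sum_list (map (\<lambda>v. F (gel T g s j # v)) (beta_cols T g s (Suc m)))) =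
      (\<Sum>a\<in>principal_ideal g. sum_list (map (\<lambda>v. F (a # v)) (beta_cols T g s (Suc m))))"
    by (rule sum.reindex_bij_betw[OF bij_betw_gel])
  finally show ?thesis
    by (simp only: sum_alpha_cols sum_list_map_sum)
qed

text \<open>The columns of G_k^beta represent the vectors with a unit entry modulo multiplication
  by units, each class having |R^*| elements.\<close>
lemma sum_beta_cols:
  assumes "\<And>u v. u dvd 1 \<Longrightarrow> length v = Suc m \<Longrightarrow> F (map ((*) u) v) = F v"
  shows "card {u::'a. u dvd 1} * sum_list (map F (beta_cols T g s (Suc m))) =
    (\<Sum>v\<in>primitive_vectors (Suc m). F v)"
  using assms
proof (induction m arbitrary: F)
  case 0
  then show ?case
    by (simp add: sum_primitive_vectors_Suc)
next
  case (Suc m)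
  define G where "G v = (\<Sum>a\<in>principal_ideal g. F (a # v))" for v
  have "G (map ((*) u) v) = G v" if u: "u dvd 1" and v: "length v = Suc m" for u v
  proof -
    obtain u' where u': "u * u' = 1" "u' dvd 1"
      using u by (rule unit_inverse)
    have "G (map ((*) u) v) = (\<Sum>a\<in>principal_ideal g. F (map ((*) u) (u' * a # v)))"
      unfolding G_def using u'(1) by (simp add: mult.assoc[symmetric])
    also have "\<dots> = (\<Sum>a\<in>principal_ideal g. F (u' * a # v))"
      by (intro sum.cong refl Suc.prems[OF u]) (simp add: v)
    also have "\<dots> = G v"
      unfolding G_def by (rule sum_ideal_mult_unit[OF is_ideal_principal_ideal u'(2)])
    finally show ?thesis .
  qed
  then have "card {u::'a. u dvd 1} * sum_list (map G (beta_cols T g s (Suc m))) =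
      (\<Sum>v\<in>primitive_vectors (Suc m). G v)"
    by (rule Suc.IH)
  moreover have "(\<Sum>v\<in>primitive_vectors (Suc (Suc m)). F v) =
      card {u::'a. u dvd 1} * (\<Sum>v\<in>vectors UNIV (Suc m). F (1 # v)) +
      (\<Sum>v\<in>primitive_vectors (Suc m). G v)"
    unfolding G_def by (rule sum_primitive_vectors_Suc[OF Suc.prems])
  ultimately show ?case
    unfolding sum_beta_cols_Suc G_def by (simp add: distrib_left)
qed

subsection \<open>Homogeneous weights of codewords\<close>

abbreviation w :: "'a \<Rightarrow> nat" where "w \<equiv> hom_weight q g s"

lemma hom_weight_unit_mult:
  assumes "u dvd 1"
  shows "w (u * z) = w z"
proof -
  obtain v where "u * v = 1" using assms by (rule unit_inverse)
  then have "z = v * (u * z)"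
    by (simp add: mult.assoc[symmetric] mult.commute[of v])
  then have "u * z \<in> pow_ideal (s - 1) \<longleftrightarrow> z \<in> pow_ideal (s - 1)"
    using is_ideal_mult[OF is_ideal_principal_ideal, of "u * z" _ v]
      is_ideal_mult[OF is_ideal_principal_ideal, of z _ u] by metis
  moreover have "u * z = 0 \<longleftrightarrow> z = 0"
    using unit_mult_eq_0_iff[OF assms, of z] by (simp add: mult.commute)
  ultimately show ?thesis
    unfolding hom_weight_def by simp
qed

lemma card_units: "card {u::'a. u dvd 1} = (q - 1) * q ^ (s - 1)"
proof -
  have "{u::'a. u dvd 1} = UNIV - principal_ideal g"
    using unit_iff_notin_maximal by auto
  then have "card {u::'a. u dvd 1} = q * q ^ (s - 1) - q ^ (s - 1)"
    using card_Diff_subset[of "principal_ideal g" UNIV] card_UNIV card_pow_ideal[of 1] s_pos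
    by (simp flip: power_Suc)
  then show ?thesis
    by (simp add: diff_mult_distrib)
qed

lemma sum_hom_weight_pow_mult:
  assumes "j + t < s"
  shows "q * (\<Sum>a\<in>pow_ideal j. w (g ^ t * a)) = (q - 1) * q ^ (s - 1) * q ^ (s - j)"
proof -
  let ?A = "q ^ (s - j)" and ?B = "q ^ Suc t"
  have "(\<Sum>a\<in>pow_ideal j. w (g ^ t * a)) = (\<Sum>a\<in>pow_ideal j.
      if a \<in> pow_ideal (s - t) then 0
      else if a \<in> pow_ideal (s - 1 - t) then q ^ (s - 1) else (q - 1) * q ^ (s - 2))"
    using assms
    by (intro sum.cong refl)
       (simp add: hom_weight_def pow_mult_eq_0_iff pow_mult_mem_pow_ideal_iff)
  also have "\<dots> = (q - 1) * q ^ (s - 2) * (card (pow_ideal j) - card (pow_ideal (s - 1 - t))) +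
      q ^ (s - 1) * (card (pow_ideal (s - 1 - t)) - card (pow_ideal (s - t)))"
    using assms by (intro sum_nested_step_function pow_ideal_antimono) simp_all
  also have "\<dots> = (q - 1) * q ^ (s - 2) * (?A - ?B) + q ^ (s - 1) * (?B - q ^ t)"
    using assms by (simp add: card_pow_ideal Suc_diff_Suc)
  finally have sum_eq: "(\<Sum>a\<in>pow_ideal j. w (g ^ t * a)) = \<dots>" .
  have first: "q * q ^ (s - 2) * (?A - ?B) = q ^ (s - 1) * (?A - ?B)"
  proof (cases "s \<ge> 2")
    case True
    then have "Suc (s - 2) = s - 1" by simp
    then show ?thesis by (metis power_Suc)
  next
    case False
    then have "s = 1" "j = 0" "t = 0" using assms by auto
    then show ?thesis by simp
  qed
  have second: "q * (q ^ (s - 1) * (?B - q ^ t)) = (q - 1) * q ^ (s - 1) * ?B"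
    by (simp add: diff_mult_distrib algebra_simps)
  have "?B \<le> ?A"
    using assms q_ge_2 by (intro power_increasing) linarith+
  then have "?A - ?B + ?B = ?A" by simp
  have "q * (\<Sum>a\<in>pow_ideal j. w (g ^ t * a)) =
      (q - 1) * (q * q ^ (s - 2) * (?A - ?B)) + q * (q ^ (s - 1) * (?B - q ^ t))"
    unfolding sum_eq by (simp only: distrib_left mult_ac)
  also have "\<dots> = (q - 1) * q ^ (s - 1) * (?A - ?B) + (q - 1) * q ^ (s - 1) * ?B"
    unfolding first second by (simp only: mult_ac)
  also have "\<dots> = (q - 1) * q ^ (s - 1) * ?A"
    by (metis add_mult_distrib2 \<open>?A - ?B + ?B = ?A\<close>)
  finally show ?thesis .
qed

lemma primitive_vectors_eq: "primitive_vectors k = vectors UNIV k - vectors (principal_ideal g) k"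
  unfolding primitive_vectors_def vectors_def using unit_iff_notin_maximal by auto

lemma hom_weight_vec_codeword_eq:
  assumes "i < k" "x i dvd 1"
  shows "(q - 1) * q ^ (s - 1) *
      hom_weight_vec q g s (map (\<lambda>v. g ^ t * dot k x v) (beta_cols T g s k)) +
      q ^ ((s - 1) * (k - 1)) * (\<Sum>a\<in>principal_ideal g. w (g ^ t * a)) =
    q ^ (s * (k - 1)) * (\<Sum>a\<in>UNIV. w (g ^ t * a))"
proof -
  obtain m where k: "k = Suc m"
    using assms(1) by (cases k) auto
  obtain e where e: "x i * e = 1"
    using assms(2) by (rule unit_inverse)
  let ?F = "\<lambda>v. w (g ^ t * dot k x v)"
  have "(q - 1) * q ^ (s - 1) * hom_weight_vec q g s (map (\<lambda>v. g ^ t * dot k x v) (beta_cols T g s k)) =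
      card {u::'a. u dvd 1} * sum_list (map ?F (beta_cols T g s k))"
    unfolding hom_weight_vec_def card_units by (simp add: comp_def)
  also have "\<dots> = (\<Sum>v\<in>primitive_vectors k. ?F v)"
    unfolding k
    by (rule sum_beta_cols)
       (simp add: dot_map_mult hom_weight_unit_mult mult.left_commute[of "g ^ t"])
  finally have "(q - 1) * q ^ (s - 1) *
      hom_weight_vec q g s (map (\<lambda>v. g ^ t * dot k x v) (beta_cols T g s k)) +
      (\<Sum>v\<in>vectors (principal_ideal g) k. ?F v) = (\<Sum>v\<in>vectors UNIV k. ?F v)"
    unfolding primitive_vectors_eq
    by (simp add: sum.subset_diff[OF vectors_mono finite_vectors, of "principal_ideal g" UNIV])
  moreover have "(\<Sum>v\<in>vectors UNIV k. ?F v) = q ^ (s * m) * (\<Sum>a\<in>UNIV. w (g ^ t * a))"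
    using sum_vectors_dot[where I = UNIV and x = x and i = i and e = e and m = m
        and h = "\<lambda>a. w (g ^ t * a)"] is_ideal_principal_ideal[of 1] e assms(1) card_UNIV
    unfolding k by (simp add: power_mult)
  moreover have "(\<Sum>v\<in>vectors (principal_ideal g) k. ?F v) =
      q ^ ((s - 1) * m) * (\<Sum>a\<in>principal_ideal g. w (g ^ t * a))"
    using sum_vectors_dot[where I = "principal_ideal g" and x = x and i = i and e = e and m = m
        and h = "\<lambda>a. w (g ^ t * a)"] is_ideal_principal_ideal[of g] e assms(1)
      card_pow_ideal[of 1] s_pos
    unfolding k by (simp add: power_mult)
  ultimately show ?thesis
    unfolding k by simp
qed

lemma sum_hom_weight_pow_mult_maximal:
  assumes "t < s"
  shows "q * (\<Sum>a\<in>principal_ideal g. w (g ^ t * a)) =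
    (q - 1) * q ^ (s - 1) * (if t + 1 < s then q ^ (s - 1) else 0)"
proof (cases "t + 1 < s")
  case True
  then show ?thesis
    using sum_hom_weight_pow_mult[of 1 t] by simp
next
  case False
  then have "s - t = 1"
    using assms by simp
  then have "g ^ t * a = 0" if "a \<in> principal_ideal g" for a
    using that assms pow_mult_eq_0_iff[of t a] by simp
  then show ?thesis
    using False by (simp add: hom_weight_def)
qed

lemma q_mult_hom_weight_vec_codeword:
  assumes "t < s" "i < k" "x i dvd 1"
  defines "W \<equiv> hom_weight_vec q g s (map (\<lambda>v. g ^ t * dot k x v) (beta_cols T g s k))"
  shows "q * W + (if t + 1 < s then q ^ ((s - 1) * k) else 0) = q ^ (s * k)"
proof -
  define C where "C = (q - 1) * q ^ (s - 1)"
  define S0 where "S0 = (\<Sum>a\<in>UNIV. w (g ^ t * a))"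
  define S1 where "S1 = (\<Sum>a\<in>principal_ideal g. w (g ^ t * a))"
  define Y where "Y = (if t + 1 < s then q ^ (s - 1) else 0)"
  have eq: "C * W + q ^ ((s - 1) * (k - 1)) * S1 = q ^ (s * (k - 1)) * S0"
    unfolding C_def W_def S0_def S1_def
    by (rule hom_weight_vec_codeword_eq[where x = x and i = i, OF assms(2,3)])
  have S0: "q * S0 = C * q ^ s"
    unfolding S0_def C_def using sum_hom_weight_pow_mult[of 0 t] assms(1) by simp
  have S1: "q * S1 = C * Y"
    unfolding S1_def C_def Y_def by (rule sum_hom_weight_pow_mult_maximal[OF assms(1)])
  let ?A = "q ^ ((s - 1) * (k - 1))" and ?B = "q ^ (s * (k - 1))"
  have "C * (q * W + ?A * Y) = q * (C * W) + ?A * (C * Y)"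
    by (simp only: distrib_left mult_ac)
  also have "\<dots> = q * (C * W + ?A * S1)"
    by (simp only: S1[symmetric] distrib_left mult_ac)
  also have "\<dots> = ?B * (q * S0)"
    by (subst eq) (simp only: mult_ac)
  also have "\<dots> = C * (?B * q ^ s)"
    by (subst S0) (simp only: mult_ac)
  finally have "C * (q * W + ?A * Y) = C * (?B * q ^ s)" .
  moreover have "C \<noteq> 0"
    unfolding C_def using q_ge_2 by simp
  ultimately have "q * W + ?A * Y = ?B * q ^ s"
    by (rule mult_left_cancel[THEN iffD1, rotated])
  moreover have "(s - 1) * (k - 1) + (s - 1) = (s - 1) * k" "s * (k - 1) + s = s * k"
    using assms(2) by (cases k; simp)+
  then have "?A * Y = (if t + 1 < s then q ^ ((s - 1) * k) else 0)" "?B * q ^ s = q ^ (s * k)"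
    unfolding Y_def by (simp_all flip: power_add)
  ultimately show ?thesis
    by simp
qed

lemma val_vec_codeword:
  assumes "t < s" "i < k" "x i dvd 1"
  shows "val_vec g (map (\<lambda>v. g ^ t * dot k x v) (beta_cols T g s k)) = enat t"
  unfolding val_vec_def
proof (rule Min_eqI)
  obtain m where k: "k = Suc m"
    using assms(2) by (cases k) auto
  let ?e = "(replicate k 0)[i := 1]"
  have "?e \<in> set (beta_cols T g s k)"
    using unit_vector_in_beta_cols assms(2) unfolding k by blast
  moreover have "val g (g ^ t * dot k x ?e) = enat t"
    using val_pow_mult_unit[OF assms(3,1)] dot_unit_vector[OF assms(2), of x] by simp
  ultimately show "enat t \<in> set (map (val g) (map (\<lambda>v. g ^ t * dot k x v) (beta_cols T g s k)))"
    by force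
qed (auto simp: val_pow_mult_ge)

lemma hom_weight_vec_codeword_socle:
  assumes "i < k" "x i dvd 1"
  shows "hom_weight_vec q g s (map (\<lambda>v. g ^ (s - 1) * dot k x v) (beta_cols T g s k)) =
    q ^ (s * k - 1)"
proof -
  have "Suc (s * k - 1) = s * k"
    using assms(1) s_pos by (cases k) auto
  then have "q ^ (s * k) = q * q ^ (s * k - 1)"
    by (metis power_Suc)
  then show ?thesis
    using q_mult_hom_weight_vec_codeword[where t = "s - 1" and x = x and i = i, OF _ assms] s_pos
    by simp
qed

lemma hom_weight_vec_codeword_below_socle:
  assumes "t + 1 < s" "i < k" "x i dvd 1"
  shows "hom_weight_vec q g s (map (\<lambda>v. g ^ t * dot k x v) (beta_cols T g s k)) =
    q ^ (s * k - k - 1) * (q ^ k - 1)"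
proof -
  obtain r where s: "s = Suc r"
    using s_pos by (cases s) auto
  have "0 < (s - 1) * k" "s * k - k = (s - 1) * k"
    using assms(1,2) by (simp_all add: diff_mult_distrib)
  then have "Suc (s * k - k - 1) = (s - 1) * k"
    by simp
  then have "q * (q ^ (s * k - k - 1) * (q ^ k - 1)) = q ^ ((s - 1) * k) * (q ^ k - 1)"
    by (metis mult.assoc power_Suc)
  also have "\<dots> = q ^ (s * k) - q ^ ((s - 1) * k)"
    unfolding s by (simp add: diff_mult_distrib2 power_add mult.commute)
  finally have "q * (q ^ (s * k - k - 1) * (q ^ k - 1)) = q ^ (s * k) - q ^ ((s - 1) * k)" .
  moreover have "q * hom_weight_vec q g s (map (\<lambda>v. g ^ t * dot k x v) (beta_cols T g s k)) =
      q ^ (s * k) - q ^ ((s - 1) * k)"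
    using q_mult_hom_weight_vec_codeword[where t = t and x = x and i = i, OF _ assms(2,3)] assms(1)
    by simp
  ultimately have "q * hom_weight_vec q g s (map (\<lambda>v. g ^ t * dot k x v) (beta_cols T g s k)) =
      q * (q ^ (s * k - k - 1) * (q ^ k - 1))"
    by (simp only:)
  then show ?thesis
    by simp
qed

lemma codeword_zero:
  assumes "k \<ge> 1" "\<forall>i<k. x i = 0"
  shows "val_vec g (map (dot k x) (beta_cols T g s k)) = \<infinity>"
    and "hom_weight_vec q g s (map (dot k x) (beta_cols T g s k)) = 0"
proof -
  have c0: "map (dot k x) (beta_cols T g s k) = map (\<lambda>_. 0) (beta_cols T g s k)"
    using assms(2) unfolding dot_def by simp
  have "beta_cols T g s k \<noteq> []"
    using unit_vector_in_beta_cols[of 0 "k - 1"] assms(1) by auto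
  then show "val_vec g (map (dot k x) (beta_cols T g s k)) = \<infinity>"
    unfolding c0 val_vec_def by (simp add: val_def image_constant_conv)
  show "hom_weight_vec q g s (map (dot k x) (beta_cols T g s k)) = 0"
    unfolding c0 hom_weight_vec_def by (simp add: comp_def hom_weight_def)
qed

end

theorem proposition3p24:
  fixes g :: "'a::{comm_ring_1, finite}" and s :: nat and T :: "'a list"
    and k :: nat and c :: "'a list"
  assumes "chain_ring TYPE('a)"
    and "is_maximal_ideal (principal_ideal g)"
    and "nilpotency_index g s"
    and "coset_reps T g"
    and "k \<ge> 1"
    and "c \<in> S_beta T g s k"
  shows "(val_vec g c = enat (s - 1) \<longrightarrow>
            hom_weight_vec (length T) g s c = length T ^ (s * k - 1))
       \<and> (val_vec g c < enat (s - 1) \<longrightarrow>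
            hom_weight_vec (length T) g s c = length T ^ (s * k - k - 1) * (length T ^ k - 1))
       \<and> (val_vec g c > enat (s - 1) \<longrightarrow> hom_weight_vec (length T) g s c = 0)"
proof -
  interpret finite_chain_ring g s T
    using assms(1-4) by unfold_locales
  obtain x where c: "c = map (dot k x) (beta_cols T g s k)"
    using assms(6) unfolding S_beta_def dot_def by blast
  show ?thesis
  proof (cases "\<forall>i<k. x i = 0")
    case True
    then show ?thesis
      using codeword_zero[OF assms(5) True] unfolding c by simp
  next
    case False
    then obtain i1 where "i1 < k" "x i1 \<noteq> 0"
      by auto
    then obtain t i x' where t: "t < s" and i: "i < k" "x' i dvd 1"
      and x: "\<forall>i<k. x i = g ^ t * x' i"
      by (rule coefficients_eq_pow_mult_unit[where x = x])
    have "c = map (\<lambda>v. g ^ t * dot k x' v) (beta_cols T g s k)"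
      unfolding c dot_def using x by (simp add: sum_distrib_left mult.assoc)
    then show ?thesis
      using val_vec_codeword[where x = x', OF t i] hom_weight_vec_codeword_socle[where x = x', OF i]
        hom_weight_vec_codeword_below_socle[where x = x', OF _ i] t
      by (cases "t + 1 < s") auto
  qed
qed

end
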